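(* None of the following classes of topological spaces is $\omega$-projective: compact locally compact spaces; compact locally compact sober spaces; stably compact spaces.
   Context: A projective system of topological spaces consists of a directed preordered set $(I,\sqsubseteq)$, spaces $X_i$ and continuous maps $p_{ij}\colon X_j\to X_i$ for $i\sqsubseteq j$ with $p_{ii}=\mathrm{id}$ and $p_{ij}\circ p_{jk}=p_{ik}$; its projective limit is its limit in the category of topological spaces. A class is $\omega$-projective if it is closed under projective limits of systems whose index set has a countable cofinal subset. Compactness assumes no separation axiom. A space is locally compact if for every point $x$ and open neighbourhood $U$ of $x$ there is a compact saturated set $Q$ with $x\in\mathrm{int}(Q)\subseteq Q\subseteq U$ (saturated = upward closed in the specialization preorder). Sober: $T_0$ and every irreducible closed set is the closure of a point. Coherent: the intersection of any two compact saturated subsets is compact. Stably compact: sober, locally compact, coherent and compact. *)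

theory Defs
  imports "HOL-Analysis.Analysis"
begin

definition spec_le :: "'a topology \<Rightarrow> 'a \<Rightarrow> 'a \<Rightarrow> bool" where
  "spec_le X x y \<longleftrightarrow> x \<in> X closure_of {y}"

definition saturated_in :: "'a topology \<Rightarrow> 'a set \<Rightarrow> bool" where
  "saturated_in X Q \<longleftrightarrow> Q \<subseteq> topspace X \<and>
     (\<forall>x\<in>Q. \<forall>y\<in>topspace X. spec_le X x y \<longrightarrow> y \<in> Q)"

definition loc_compact :: "'a topology \<Rightarrow> bool" where
  "loc_compact X \<longleftrightarrow> (\<forall>x U. openin X U \<and> x \<in> U \<longrightarrow>
     (\<exists>Q. compactin X Q \<and> saturated_in X Q \<and> x \<in> X interior_of Q \<and> Q \<subseteq> U))"

definition irreducible_closed :: "'a topology \<Rightarrow> 'a set \<Rightarrow> bool" where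
  "irreducible_closed X C \<longleftrightarrow> closedin X C \<and> C \<noteq> {} \<and>
     (\<forall>A B. closedin X A \<and> closedin X B \<and> C \<subseteq> A \<union> B \<longrightarrow> C \<subseteq> A \<or> C \<subseteq> B)"

definition sober :: "'a topology \<Rightarrow> bool" where
  "sober X \<longleftrightarrow> t0_space X \<and>
     (\<forall>C. irreducible_closed X C \<longrightarrow> (\<exists>x\<in>topspace X. C = X closure_of {x}))"

definition coherent :: "'a topology \<Rightarrow> bool" where
  "coherent X \<longleftrightarrow> (\<forall>Q1 Q2. compactin X Q1 \<and> saturated_in X Q1 \<and>
      compactin X Q2 \<and> saturated_in X Q2 \<longrightarrow> compactin X (Q1 \<inter> Q2))"

definition stably_compact :: "'a topology \<Rightarrow> bool" where
  "stably_compact X \<longleftrightarrow> sober X \<and> loc_compact X \<and> coherent X \<and> compact_space X"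

definition projective_system ::
  "'i set \<Rightarrow> ('i \<Rightarrow> 'i \<Rightarrow> bool) \<Rightarrow> ('i \<Rightarrow> 'a topology) \<Rightarrow> ('i \<Rightarrow> 'i \<Rightarrow> 'a \<Rightarrow> 'a) \<Rightarrow> bool" where
  "projective_system I le X p \<longleftrightarrow>
     (\<forall>i\<in>I. le i i) \<and>
     (\<forall>i\<in>I. \<forall>j\<in>I. \<forall>k\<in>I. le i j \<and> le j k \<longrightarrow> le i k) \<and>
     I \<noteq> {} \<and>
     (\<forall>i\<in>I. \<forall>j\<in>I. \<exists>k\<in>I. le i k \<and> le j k) \<and>
     (\<forall>i\<in>I. \<forall>j\<in>I. le i j \<longrightarrow> continuous_map (X j) (X i) (p i j)) \<and>
     (\<forall>i\<in>I. \<forall>x\<in>topspace (X i). p i i x = x) \<and>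
     (\<forall>i\<in>I. \<forall>j\<in>I. \<forall>k\<in>I. le i j \<and> le j k \<longrightarrow>
        (\<forall>x\<in>topspace (X k). p i j (p j k x) = p i k x))"

definition countably_cofinal :: "'i set \<Rightarrow> ('i \<Rightarrow> 'i \<Rightarrow> bool) \<Rightarrow> bool" where
  "countably_cofinal I le \<longleftrightarrow> (\<exists>J\<subseteq>I. countable J \<and> (\<forall>i\<in>I. \<exists>j\<in>J. le i j))"

definition proj_limit ::
  "'i set \<Rightarrow> ('i \<Rightarrow> 'i \<Rightarrow> bool) \<Rightarrow> ('i \<Rightarrow> 'a topology) \<Rightarrow> ('i \<Rightarrow> 'i \<Rightarrow> 'a \<Rightarrow> 'a) \<Rightarrow> ('i \<Rightarrow> 'a) topology" where
  "proj_limit I le X p = subtopology (product_topology X I)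
     {x \<in> topspace (product_topology X I). \<forall>i\<in>I. \<forall>j\<in>I. le i j \<longrightarrow> p i j (x j) = x i}"

text \<open>A class (predicate on spaces, used at the index/point types 'i, 'a) is omega-projective
  if it is closed under projective limits of systems with a countable cofinal subset.\<close>
definition omega_projective ::
  "('a topology \<Rightarrow> bool) \<Rightarrow> (('i \<Rightarrow> 'a) topology \<Rightarrow> bool) \<Rightarrow> 'i itself \<Rightarrow> bool" where
  "omega_projective C C' _ \<longleftrightarrow>
     (\<forall>(I::'i set) le X p. projective_system I le X p \<and> countably_cofinal I le \<and>
        (\<forall>i\<in>I. C (X i)) \<longrightarrow> C' (proj_limit I le X p))"

definition cpt_lc :: "'a topology \<Rightarrow> bool" where
  "cpt_lc X \<longleftrightarrow> compact_space X \<and> loc_compact X"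

definition cpt_lc_sober :: "'a topology \<Rightarrow> bool" where
  "cpt_lc_sober X \<longleftrightarrow> compact_space X \<and> loc_compact X \<and> sober X"

end

theory Submission
  imports Defs
begin

text \<open>Stage n of the system is \<open>\<nat>\<^sup>n\<close> with an excluded point \<open>\<bottom>\<close> adjoined: the open
  sets are the whole space and the sets missing \<open>\<bottom>\<close>. Such a space is stably compact, because
  \<open>\<bottom>\<close> lies below every point and its only neighbourhood is the whole space. With truncation
  of sequences as bonding maps, the projective limit is \<open>\<nat>\<^sup>\<nat> \<union> {\<bottom>}\<close>, in which \<open>\<nat>\<^sup>\<nat>\<close> is an
  open subspace carrying the Baire space topology, so the limit is not locally compact: a
  compact neighbourhood of a point of \<open>\<nat>\<^sup>\<nat>\<close> inside \<open>\<nat>\<^sup>\<nat>\<close> contains the cylinder of all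
  sequences with a given prefix of length n, yet its projection to stage n + 1 is compact and
  avoids \<open>\<bottom>\<close>, hence finite, while that cylinder has infinitely many one-step extensions.\<close>

definition excluded_point_topology :: "'a set \<Rightarrow> 'a \<Rightarrow> 'a topology" where
  "excluded_point_topology S p = topology (\<lambda>U. U \<subseteq> S \<and> (p \<in> U \<longrightarrow> U = S))"

lemma openin_excluded_point_topology:
  "openin (excluded_point_topology S p) U \<longleftrightarrow> U \<subseteq> S \<and> (p \<in> U \<longrightarrow> U = S)"
proof -
  have "istopology (\<lambda>U. U \<subseteq> S \<and> (p \<in> U \<longrightarrow> U = S))"
    unfolding istopology_def by blast
  then show ?thesis
    by (simp add: excluded_point_topology_def)
qed

lemma topspace_excluded_point_topology [simp]:
  "topspace (excluded_point_topology S p) = S"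
  unfolding topspace_def openin_excluded_point_topology by blast

lemma closedin_excluded_point_topology:
  assumes "p \<in> S"
  shows "closedin (excluded_point_topology S p) C \<longleftrightarrow> C \<subseteq> S \<and> (C = {} \<or> p \<in> C)"
  using assms unfolding closedin_def openin_excluded_point_topology by auto

lemma compactin_excluded_point_topology:
  "compactin (excluded_point_topology S p) Q \<longleftrightarrow> Q \<subseteq> S \<and> (p \<in> Q \<or> finite Q)"
proof (intro iffI conjI)
  assume Q: "compactin (excluded_point_topology S p) Q"
  then show "Q \<subseteq> S"
    using compactin_subset_topspace by fastforce
  have "finite Q" if "p \<notin> Q"
  proof -
    from that have "\<forall>U \<in> (\<lambda>q. {q}) ` Q. openin (excluded_point_topology S p) U"
      using \<open>Q \<subseteq> S\<close> by (auto simp: openin_excluded_point_topology)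
    moreover have "Q \<subseteq> \<Union> ((\<lambda>q. {q}) ` Q)"
      by blast
    ultimately obtain \<F> where "finite \<F>" "\<F> \<subseteq> (\<lambda>q. {q}) ` Q" "Q \<subseteq> \<Union>\<F>"
      using Q unfolding compactin_def by meson
    moreover from \<open>\<F> \<subseteq> (\<lambda>q. {q}) ` Q\<close> have "\<forall>A\<in>\<F>. finite A"
      by blast
    ultimately show "finite Q"
      by (meson finite_Union finite_subset)
  qed
  then show "p \<in> Q \<or> finite Q"
    by blast
next
  assume Q: "Q \<subseteq> S \<and> (p \<in> Q \<or> finite Q)"
  show "compactin (excluded_point_topology S p) Q"
  proof (cases "finite Q")
    case True
    with Q show ?thesis
      by (simp add: finite_imp_compactin)
  next
    case False
    with Q have "p \<in> Q"
      by blast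
    show ?thesis
      unfolding compactin_def
    proof (intro conjI allI impI)
      fix \<U> assume \<U>: "(\<forall>U\<in>\<U>. openin (excluded_point_topology S p) U) \<and> Q \<subseteq> \<Union>\<U>"
      then obtain U where "U \<in> \<U>" "p \<in> U"
        using \<open>p \<in> Q\<close> by blast
      with \<U> have "U = S"
        by (simp add: openin_excluded_point_topology)
      with \<open>U \<in> \<U>\<close> Q show "\<exists>\<F>. finite \<F> \<and> \<F> \<subseteq> \<U> \<and> Q \<subseteq> \<Union>\<F>"
        by (intro exI[of _ "{U}"]) auto
    qed (use Q in simp)
  qed
qed

lemma closure_of_singleton_excluded_point_topology:
  assumes "p \<in> S" "a \<in> S"
  shows "excluded_point_topology S p closure_of {a} = {p, a}"
proof -
  let ?X = "excluded_point_topology S p"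
  have "?X closure_of {a} \<subseteq> {p, a}"
    using assms by (intro closure_of_minimal) (auto simp: closedin_excluded_point_topology)
  moreover have a: "a \<in> ?X closure_of {a}"
    using closure_of_subset[of "{a}" ?X] assms by simp
  moreover have "p \<in> ?X closure_of {a}"
    using closedin_closure_of[of ?X "{a}"] a
    unfolding closedin_excluded_point_topology[OF assms(1)] by blast
  ultimately show ?thesis
    by blast
qed

lemma spec_le_excluded_point_topology:
  assumes "p \<in> S" "y \<in> S"
  shows "spec_le (excluded_point_topology S p) x y \<longleftrightarrow> x = p \<or> x = y"
  using assms by (simp add: spec_le_def closure_of_singleton_excluded_point_topology)

lemma saturated_in_excluded_point_topology:
  assumes "p \<in> S"
  shows "saturated_in (excluded_point_topology S p) Q \<longleftrightarrow> Q \<subseteq> S \<and> (p \<in> Q \<longrightarrow> Q = S)"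
  using assms by (auto simp: saturated_in_def spec_le_excluded_point_topology)

lemma sober_excluded_point_topology:
  assumes "p \<in> S"
  shows "sober (excluded_point_topology S p)"
  unfolding sober_def
proof (intro conjI allI impI)
  show "t0_space (excluded_point_topology S p)"
    unfolding t0_space_def topspace_excluded_point_topology
  proof (intro ballI impI)
    fix x y assume "x \<in> S" "y \<in> S" "x \<noteq> y"
    then have "openin (excluded_point_topology S p) {if x = p then y else x}"
      by (auto simp: openin_excluded_point_topology)
    with \<open>x \<noteq> y\<close> show "\<exists>U. openin (excluded_point_topology S p) U \<and> (x \<notin> U \<longleftrightarrow> y \<in> U)"
      by (intro exI[of _ "{if x = p then y else x}"]) auto
  qed
next
  fix C assume C: "irreducible_closed (excluded_point_topology S p) C"
  then have "C \<subseteq> S" "p \<in> C"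
    using assms by (auto simp: irreducible_closed_def closedin_excluded_point_topology)
  have "\<exists>a. C = {p, a}"
  proof (rule ccontr)
    assume no_pair: "\<nexists>a. C = {p, a}"
    have "C \<noteq> {p, p}"
      using no_pair by blast
    then obtain a where a: "a \<in> C" "a \<noteq> p"
      using \<open>p \<in> C\<close> by auto
    have "C \<noteq> {p, a}"
      using no_pair by blast
    then obtain b where b: "b \<in> C" "b \<noteq> p" "b \<noteq> a"
      using \<open>p \<in> C\<close> a by auto
    have "closedin (excluded_point_topology S p) (C - {a})"
      "closedin (excluded_point_topology S p) (C - {b})"
      using assms \<open>C \<subseteq> S\<close> \<open>p \<in> C\<close> a b by (auto simp: closedin_excluded_point_topology)
    moreover have "C \<subseteq> (C - {a}) \<union> (C - {b})"
      using b by blast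
    ultimately have "C \<subseteq> C - {a} \<or> C \<subseteq> C - {b}"
      using C unfolding irreducible_closed_def by blast
    with a b show False
      by blast
  qed
  then obtain a where "C = {p, a}"
    by blast
  with \<open>C \<subseteq> S\<close> assms
  show "\<exists>x\<in>topspace (excluded_point_topology S p). C = excluded_point_topology S p closure_of {x}"
    by (intro bexI[of _ a]) (auto simp: closure_of_singleton_excluded_point_topology)
qed

lemma loc_compact_excluded_point_topology:
  assumes "p \<in> S"
  shows "loc_compact (excluded_point_topology S p)"
  unfolding loc_compact_def
proof (intro allI impI)
  fix x U assume U: "openin (excluded_point_topology S p) U \<and> x \<in> U"
  define Q where "Q = (if x = p then S else {x})"
  have "openin (excluded_point_topology S p) Q" "x \<in> Q" "Q \<subseteq> U"
    using U by (auto simp: Q_def openin_excluded_point_topology)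
  moreover have "compactin (excluded_point_topology S p) Q"
    "saturated_in (excluded_point_topology S p) Q"
    using U assms by (auto simp: Q_def openin_excluded_point_topology
        compactin_excluded_point_topology saturated_in_excluded_point_topology)
  ultimately show "\<exists>Q. compactin (excluded_point_topology S p) Q
      \<and> saturated_in (excluded_point_topology S p) Q
      \<and> x \<in> excluded_point_topology S p interior_of Q \<and> Q \<subseteq> U"
    by (metis interior_of_openin)
qed

lemma stably_compact_excluded_point_topology:
  assumes "p \<in> S"
  shows "stably_compact (excluded_point_topology S p)"
proof -
  have "coherent (excluded_point_topology S p)"
    using assms unfolding coherent_def
    by (auto simp: compactin_excluded_point_topology saturated_in_excluded_point_topology)
  moreover have "compact_space (excluded_point_topology S p)"
    using assms by (simp add: compact_space_def compactin_excluded_point_topology)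
  ultimately show ?thesis
    using assms by (simp add: stably_compact_def sober_excluded_point_topology
        loc_compact_excluded_point_topology)
qed

lemma continuous_map_excluded_point_topology:
  assumes "f ` S \<subseteq> T" "p \<in> S" "f p = q"
  shows "continuous_map (excluded_point_topology S p) (excluded_point_topology T q) f"
  using assms unfolding continuous_map_def openin_excluded_point_topology by auto

lemma topspace_proj_limit:
  "topspace (proj_limit I le X p) =
     {x \<in> Pi\<^sub>E I (\<lambda>i. topspace (X i)). \<forall>i\<in>I. \<forall>j\<in>I. le i j \<longrightarrow> p i j (x j) = x i}"
  unfolding proj_limit_def by auto

lemma continuous_map_proj_limit_component:
  "i \<in> I \<Longrightarrow> continuous_map (proj_limit I le X p) (X i) (\<lambda>x. x i)"
  unfolding proj_limit_def
  by (intro continuous_map_from_subtopology continuous_map_product_projection)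

lemma projective_system_finite_upper_bound:
  assumes "projective_system I le X p" "finite F" "F \<subseteq> I"
  shows "\<exists>k\<in>I. \<forall>i\<in>F. le i k"
  using assms(2,3)
proof (induction F rule: finite_induct)
  case empty
  have "I \<noteq> {}"
    using assms(1) unfolding projective_system_def by blast
  then show ?case
    by auto
next
  case (insert i F)
  then obtain k where k: "k \<in> I" "\<forall>j\<in>F. le j k"
    by auto
  have "\<forall>i\<in>I. \<forall>j\<in>I. \<exists>k\<in>I. le i k \<and> le j k"
    and trans: "\<forall>i\<in>I. \<forall>j\<in>I. \<forall>k\<in>I. le i j \<and> le j k \<longrightarrow> le i k"
    using assms(1) unfolding projective_system_def by blast+
  then obtain m where m: "m \<in> I" "le i m" "le k m"
    using insert.prems k(1) by blast
  have "\<forall>j\<in>F. le j m"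
  proof
    fix j assume "j \<in> F"
    with insert.prems k m trans show "le j m"
      by blast
  qed
  with m show ?case
    by blast
qed

lemma openin_proj_limit_contains_fibre:
  assumes sys: "projective_system I le X p"
    and W: "openin (proj_limit I le X p) W" "z \<in> W"
  shows "\<exists>k\<in>I. {x \<in> topspace (proj_limit I le X p). x k = z k} \<subseteq> W"
proof -
  define T where
    "T = {x \<in> topspace (product_topology X I). \<forall>i\<in>I. \<forall>j\<in>I. le i j \<longrightarrow> p i j (x j) = x i}"
  have L: "proj_limit I le X p = subtopology (product_topology X I) T"
    unfolding proj_limit_def T_def ..
  obtain V where V: "openin (product_topology X I) V" "W = V \<inter> T"
    using W(1) unfolding L openin_subtopology by auto
  obtain U where U: "finite {i \<in> I. U i \<noteq> topspace (X i)}" "z \<in> Pi\<^sub>E I U" "Pi\<^sub>E I U \<subseteq> V"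
    using V W(2) unfolding openin_product_topology_alt by blast
  obtain k where k: "k \<in> I" "\<And>i. i \<in> I \<Longrightarrow> U i \<noteq> topspace (X i) \<Longrightarrow> le i k"
    using projective_system_finite_upper_bound[OF sys U(1)] by blast
  have z: "z \<in> topspace (proj_limit I le X p)"
    using W openin_subset by blast
  show ?thesis
  proof (intro bexI[OF _ k(1)] subsetI)
    fix x assume x: "x \<in> {x \<in> topspace (proj_limit I le X p). x k = z k}"
    have "x i \<in> U i" if "i \<in> I" for i
    proof (cases "U i = topspace (X i)")
      case True
      then show ?thesis
        using x that by (auto simp: topspace_proj_limit)
    next
      case False
      with that k have "le i k"
        by blast
      have "\<forall>i\<in>I. \<forall>j\<in>I. le i j \<longrightarrow> p i j (x j) = x i"
        "\<forall>i\<in>I. \<forall>j\<in>I. le i j \<longrightarrow> p i j (z j) = z i"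
        using x z unfolding topspace_proj_limit by blast+
      then have "p i k (x k) = x i" "p i k (z k) = z i"
        using that k(1) \<open>le i k\<close> by blast+
      with x have "x i = z i"
        by simp
      with U(2) that show ?thesis
        by auto
    qed
    with x have "x \<in> Pi\<^sub>E I U"
      by (auto simp: topspace_proj_limit PiE_iff)
    with U(3) have "x \<in> V"
      by blast
    with x V L show "x \<in> W"
      by auto
  qed
qed

text \<open>The prefix \<open>(f 0, \<dots>, f (n - 1))\<close> is encoded by the finite set of codes of its graph;
  the infinite set \<^term>\<open>UNIV\<close> plays the excluded point \<open>\<bottom>\<close>.\<close>

definition prefix_code :: "(nat \<Rightarrow> nat) \<Rightarrow> nat \<Rightarrow> nat set" where
  "prefix_code f n = (\<lambda>i. prod_encode (i, f i)) ` {..<n}"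

definition prefix_truncate :: "nat \<Rightarrow> nat set \<Rightarrow> nat set" where
  "prefix_truncate m A = (if A = UNIV then UNIV else {a \<in> A. fst (prod_decode a) < m})"

definition baire_stage :: "nat \<Rightarrow> nat set topology" where
  "baire_stage n = excluded_point_topology (insert UNIV (range (\<lambda>f. prefix_code f n))) UNIV"

abbreviation baire_limit :: "(nat \<Rightarrow> nat set) topology" where
  "baire_limit \<equiv> proj_limit UNIV (\<le>) baire_stage (\<lambda>i j. prefix_truncate i)"

lemma prefix_code_neq_UNIV [simp]: "prefix_code f n \<noteq> UNIV"
  unfolding prefix_code_def using infinite_UNIV_nat by (metis finite_imageI finite_lessThan)

lemma prefix_code_eq_iff: "prefix_code f n = prefix_code g n \<longleftrightarrow> (\<forall>i<n. f i = g i)"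
proof
  assume eq: "prefix_code f n = prefix_code g n"
  show "\<forall>i<n. f i = g i"
  proof (intro allI impI)
    fix i assume "i < n"
    then have "prod_encode (i, f i) \<in> prefix_code g n"
      using eq unfolding prefix_code_def by blast
    then show "f i = g i"
      unfolding prefix_code_def by (auto simp: prod_encode_eq)
  qed
qed (auto simp: prefix_code_def)

lemma prefix_truncate_prefix_code [simp]:
  "prefix_truncate m (prefix_code f n) = prefix_code f (min m n)"
  using prefix_code_neq_UNIV[of f n] unfolding prefix_truncate_def prefix_code_def by auto

lemma prefix_truncate_UNIV [simp]: "prefix_truncate m UNIV = UNIV"
  by (simp add: prefix_truncate_def)

lemma prefix_truncate_truncate:
  "i \<le> j \<Longrightarrow> prefix_truncate i (prefix_truncate j A) = prefix_truncate i A"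
  unfolding prefix_truncate_def by auto

lemma topspace_baire_stage:
  "topspace (baire_stage n) = insert UNIV (range (\<lambda>f. prefix_code f n))"
  by (simp add: baire_stage_def)

lemma projective_system_baire: "projective_system UNIV (\<le>) baire_stage (\<lambda>i j. prefix_truncate i)"
  unfolding projective_system_def
proof (intro conjI ballI impI)
  fix i j :: nat
  show "\<exists>k\<in>UNIV. i \<le> k \<and> j \<le> k"
    by (intro bexI[of _ "max i j"]) auto
  assume "i \<le> j"
  then have "prefix_truncate i ` topspace (baire_stage j) \<subseteq> topspace (baire_stage i)"
    by (auto simp: topspace_baire_stage min_absorb1)
  then show "continuous_map (baire_stage j) (baire_stage i) (prefix_truncate i)"
    unfolding baire_stage_def by (intro continuous_map_excluded_point_topology) auto
next
  fix i :: nat and A assume "A \<in> topspace (baire_stage i)"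
  then show "prefix_truncate i A = A"
    by (auto simp: topspace_baire_stage)
next
  fix i j k :: nat and A assume "i \<le> j \<and> j \<le> k"
  then show "prefix_truncate i (prefix_truncate j A) = prefix_truncate i A"
    by (simp add: prefix_truncate_truncate)
qed auto

lemma countably_cofinal_nat: "countably_cofinal (UNIV :: nat set) (\<le>)"
  unfolding countably_cofinal_def by auto

lemma prefix_code_in_baire_limit: "prefix_code f \<in> topspace baire_limit"
  unfolding topspace_proj_limit by (simp add: topspace_baire_stage min_absorb1 PiE_iff)

lemma baire_limit_avoids_UNIV:
  assumes "x \<in> topspace baire_limit" "x 0 \<noteq> UNIV"
  shows "x n \<noteq> UNIV"
proof -
  have "\<forall>i j. i \<le> j \<longrightarrow> prefix_truncate i (x j) = x i"
    using assms(1) unfolding topspace_proj_limit by blast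
  then have "prefix_truncate 0 (x n) = x 0"
    by blast
  with assms(2) show ?thesis
    by auto
qed

lemma not_loc_compact_baire_limit: "\<not> loc_compact baire_limit"
proof
  assume lc: "loc_compact baire_limit"
  have component: "continuous_map baire_limit (baire_stage i) (\<lambda>x. x i)" for i
    by (rule continuous_map_proj_limit_component) simp
  define z where "z = prefix_code (\<lambda>_. 0)"
  define U where "U = {x \<in> topspace baire_limit. x 0 \<in> topspace (baire_stage 0) - {UNIV}}"
  have "openin (baire_stage 0) (topspace (baire_stage 0) - {UNIV})"
    by (auto simp: baire_stage_def openin_excluded_point_topology)
  then have "openin baire_limit U"
    unfolding U_def by (rule openin_continuous_map_preimage[OF component])
  moreover have "z \<in> U"
    unfolding U_def z_def using prefix_code_in_baire_limit by (simp add: topspace_baire_stage)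
  ultimately obtain Q where Q: "compactin baire_limit Q" "z \<in> baire_limit interior_of Q" "Q \<subseteq> U"
    using lc unfolding loc_compact_def by meson
  obtain n where "{x \<in> topspace baire_limit. x n = z n} \<subseteq> baire_limit interior_of Q"
    using openin_proj_limit_contains_fibre[OF projective_system_baire openin_interior_of Q(2)] by blast
  then have fibre: "{x \<in> topspace baire_limit. x n = z n} \<subseteq> Q"
    by (rule subset_trans[OF _ interior_of_subset])
  define g where "g k i = (if i < n then 0 else k)" for k i :: nat
  have "prefix_code (g k) n = z n" for k
    by (simp add: z_def g_def prefix_code_eq_iff)
  then have "prefix_code (g k) \<in> Q" for k
    using fibre prefix_code_in_baire_limit by blast
  then have "range (\<lambda>k. prefix_code (g k) (Suc n)) \<subseteq> (\<lambda>x. x (Suc n)) ` Q"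
    by blast
  moreover have "inj (\<lambda>k. prefix_code (g k) (Suc n))"
  proof (rule injI)
    fix k k' assume "prefix_code (g k) (Suc n) = prefix_code (g k') (Suc n)"
    then have "g k n = g k' n"
      by (simp add: prefix_code_eq_iff)
    then show "k = k'"
      by (simp add: g_def)
  qed
  ultimately have "infinite ((\<lambda>x. x (Suc n)) ` Q)"
    using infinite_super range_inj_infinite by blast
  moreover have "compactin (baire_stage (Suc n)) ((\<lambda>x. x (Suc n)) ` Q)"
    using image_compactin[OF Q(1) component] .
  moreover have "UNIV \<notin> (\<lambda>x. x (Suc n)) ` Q"
    using Q(3) baire_limit_avoids_UNIV unfolding U_def by blast
  ultimately show False
    by (simp add: baire_stage_def compactin_excluded_point_topology)
qed

lemma not_omega_projective_if_baire_stages: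
  assumes "\<And>n. C (baire_stage n)" "\<And>Y. C' Y \<Longrightarrow> loc_compact Y"
  shows "\<not> omega_projective C C' TYPE(nat)"
  using assms projective_system_baire countably_cofinal_nat not_loc_compact_baire_limit
  unfolding omega_projective_def by blast

theorem corollary3p7:
  shows "\<not> omega_projective (cpt_lc :: nat set topology \<Rightarrow> bool) cpt_lc TYPE(nat)
       \<and> \<not> omega_projective (cpt_lc_sober :: nat set topology \<Rightarrow> bool) cpt_lc_sober TYPE(nat)
       \<and> \<not> omega_projective (stably_compact :: nat set topology \<Rightarrow> bool) stably_compact TYPE(nat)"
proof -
  have "stably_compact (baire_stage n)" for n
    unfolding baire_stage_def by (simp add: stably_compact_excluded_point_topology)
  then show ?thesis
    by (intro conjI not_omega_projective_if_baire_stages)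
      (auto simp: cpt_lc_def cpt_lc_sober_def stably_compact_def)
qed

end
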